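(* Let $\gamma \in (0,1/6]$, let $n \geq 6$ be an integer, and let $\eta \geq \eta_1 := \max\{n, \frac{32}{\gamma^2}\log(3/\gamma)\}$. Then there exists a dataset $x_1,\dots,x_n$ (in $\mathbb{R}^d$ for some $d$) with $\|x_i\|\le 1$ for all $i$, linearly separable with maximum margin $\gamma$, such that for every integer $t$ with $1 \le t \leq n/(16\gamma)$ there exists $i \in [n]$ with $\langle w_t, x_i\rangle < 0$, where $(w_t)$ is gradient descent with step size $\eta$ on this dataset.
   Context: All labels are $+1$. Linear separability: some $w$ has $\langle w,x_i\rangle>0$ for all $i$. Maximum margin: $\max_{\|w\|=1}\min_i\langle w,x_i\rangle$. Loss $F(w) = \frac{1}{n}\sum_{i=1}^n \log(1+\exp(-\langle w, x_i\rangle))$. Gradient descent with constant step size $\eta$: $w_0 = 0$, $w_{t+1} = w_t - \eta\nabla F(w_t)$. *)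

theory Defs
  imports "HOL-Analysis.Analysis"
begin

text \<open>Vectors in R^d are represented as functions nat => real; only the
coordinates 0..d-1 matter. The dataset is indexed by i < n (x_1..x_n of the paper
become xs 0 .. xs (n-1)). All labels are +1.\<close>

definition inner_d :: "nat \<Rightarrow> (nat \<Rightarrow> real) \<Rightarrow> (nat \<Rightarrow> real) \<Rightarrow> real" where
  "inner_d d u v = (\<Sum>j<d. u j * v j)"

definition norm_d :: "nat \<Rightarrow> (nat \<Rightarrow> real) \<Rightarrow> real" where
  "norm_d d u = sqrt (inner_d d u u)"

definition lin_separable :: "nat \<Rightarrow> nat \<Rightarrow> (nat \<Rightarrow> nat \<Rightarrow> real) \<Rightarrow> bool" where
  "lin_separable d n xs \<longleftrightarrow> (\<exists>w. \<forall>i<n. inner_d d w (xs i) > 0)"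

definition max_margin :: "nat \<Rightarrow> nat \<Rightarrow> (nat \<Rightarrow> nat \<Rightarrow> real) \<Rightarrow> real" where
  "max_margin d n xs =
     (SUP w \<in> {w. norm_d d w = 1}. Min ((\<lambda>i. inner_d d w (xs i)) ` {..<n}))"

definition logloss :: "nat \<Rightarrow> nat \<Rightarrow> (nat \<Rightarrow> nat \<Rightarrow> real) \<Rightarrow> (nat \<Rightarrow> real) \<Rightarrow> real" where
  "logloss d n xs w = (1 / real n) * (\<Sum>i<n. ln (1 + exp (- inner_d d w (xs i))))"

definition grad_logloss :: "nat \<Rightarrow> nat \<Rightarrow> (nat \<Rightarrow> nat \<Rightarrow> real) \<Rightarrow> (nat \<Rightarrow> real) \<Rightarrow> (nat \<Rightarrow> real)" where
  "grad_logloss d n xs w = (\<lambda>j. - (1 / real n) *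
      (\<Sum>i<n. xs i j / (1 + exp (inner_d d w (xs i)))))"

primrec gd :: "nat \<Rightarrow> nat \<Rightarrow> (nat \<Rightarrow> nat \<Rightarrow> real) \<Rightarrow> real \<Rightarrow> nat \<Rightarrow> (nat \<Rightarrow> real)" where
  "gd d n xs \<eta> 0 = (\<lambda>j. 0)"
| "gd d n xs \<eta> (Suc t) =
     (\<lambda>j. gd d n xs \<eta> t j - \<eta> * grad_logloss d n xs (gd d n xs \<eta> t) j)"

end

theory Submission
  imports Defs
begin

text \<open>
Take the planar data \<open>x\<^sub>0 = (\<gamma>, \<gamma>)\<close> and \<open>x\<^sub>i = (\<gamma>, -1/2)\<close> for \<open>0 < i < n\<close>.
The direction \<open>e\<^sub>0\<close> has margin \<open>\<gamma>\<close>, and no unit vector does better because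
\<open>x\<^sub>0 / 2 + \<gamma> x\<^sub>1 = (1/2 + \<gamma>) \<gamma> e\<^sub>0\<close>. In a gradient step the change of
\<open>\<langle>w, v\<rangle>\<close> is \<open>\<eta>/n\<close> times a combination of the \<open>\<langle>x\<^sub>i, v\<rangle>\<close> with logistic weights in
\<open>(0, 1]\<close>, all equal to \<open>1/2\<close> at \<open>w\<^sub>0 = 0\<close>. For \<open>v = x\<^sub>0\<close> only \<open>\<langle>x\<^sub>0, x\<^sub>0\<rangle> = 2\<gamma>\<^sup>2\<close>
is positive, so each step gains at most \<open>2\<eta>\<gamma>\<^sup>2/n\<close>, while the first step drives
\<open>\<langle>w\<^sub>1, x\<^sub>0\<rangle>\<close> down to about \<open>-\<eta>\<gamma>/4\<close>; recovering takes more than \<open>n/(16\<gamma>)\<close>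
steps.
\<close>

lemma inner_d_2: "inner_d 2 u v = u 0 * v 0 + u 1 * v 1"
  by (simp add: inner_d_def numeral_2_eq_2)

lemma inner_d_add_scaled_sum:
  "inner_d d (\<lambda>j. u j + c * (\<Sum>i<n. a i * x i j)) v
     = inner_d d u v + c * (\<Sum>i<n. a i * inner_d d (x i) v)"
proof -
  have "(\<Sum>j<d. (\<Sum>i<n. a i * x i j) * v j) = (\<Sum>i<n. a i * (\<Sum>j<d. x i j * v j))"
    by (simp add: sum_distrib_left sum_distrib_right mult.assoc sum.swap[of _ "{..<d}"])
  then show ?thesis
    by (simp add: inner_d_def distrib_right sum.distrib mult.assoc flip: sum_distrib_left)
qed

lemma gd_Suc_eq:
  "gd d n xs \<eta> (Suc t) = (\<lambda>j. gd d n xs \<eta> t j + \<eta> / n *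
     (\<Sum>i<n. 1 / (1 + exp (inner_d d (gd d n xs \<eta> t) (xs i))) * xs i j))"
  by (simp add: grad_logloss_def fun_eq_iff)

lemma inner_gd_Suc:
  "inner_d d (gd d n xs \<eta> (Suc t)) v = inner_d d (gd d n xs \<eta> t) v
     + \<eta> / n * (\<Sum>i<n. inner_d d (xs i) v / (1 + exp (inner_d d (gd d n xs \<eta> t) (xs i))))"
  unfolding gd_Suc_eq inner_d_add_scaled_sum by simp

lemma inner_gd_1:
  "inner_d d (gd d n xs \<eta> 1) v = \<eta> / (2 * n) * (\<Sum>i<n. inner_d d (xs i) v)"
proof -
  have "inner_d d (\<lambda>j. 0) u = 0" for u by (simp add: inner_d_def)
  then show ?thesis
    using inner_gd_Suc[of d n xs \<eta> 0 v] by (simp flip: sum_divide_distrib)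
qed

lemma inner_gd_Suc_le:
  assumes "0 \<le> \<eta>"
  shows "inner_d d (gd d n xs \<eta> (Suc t)) v
    \<le> inner_d d (gd d n xs \<eta> t) v + \<eta> / n * (\<Sum>i<n. max 0 (inner_d d (xs i) v))"
proof -
  have "a / (1 + exp s) \<le> max 0 a" for a s :: real
  proof -
    have "1 \<le> 1 + exp s" by (simp add: add_nonneg_pos)
    then show ?thesis
      by (cases "a \<le> 0") (auto simp: divide_le_eq add_pos_pos intro: order_trans[of _ a])
  qed
  then have "(\<Sum>i<n. inner_d d (xs i) v / (1 + exp (inner_d d (gd d n xs \<eta> t) (xs i))))
      \<le> (\<Sum>i<n. max 0 (inner_d d (xs i) v))"
    by (intro sum_mono)
  with assms show ?thesis
    unfolding inner_gd_Suc by (intro add_left_mono mult_left_mono) auto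
qed

lemma inner_gd_le_linear:
  assumes "0 \<le> \<eta>"
  shows "inner_d d (gd d n xs \<eta> (Suc k)) v
    \<le> inner_d d (gd d n xs \<eta> 1) v + k * (\<eta> / n * (\<Sum>i<n. max 0 (inner_d d (xs i) v)))"
proof (induction k)
  case (Suc k)
  let ?c = "\<eta> / n * (\<Sum>i<n. max 0 (inner_d d (xs i) v))"
  have "real (Suc k) * ?c = real k * ?c + ?c"
    by (simp only: of_nat_Suc distrib_right mult_1 add.commute)
  then show ?case
    using Suc.IH inner_gd_Suc_le[OF assms, of d n xs "Suc k" v] by linarith
qed simp

lemma sum_lessThan_if_first:
  fixes a b :: real
  assumes "1 \<le> n"
  shows "(\<Sum>i<n. if i = 0 then a else b) = a + (real n - 1) * b"
proof -
  obtain k where "n = Suc k" using assms by (cases n) auto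
  then show ?thesis unfolding \<open>n = Suc k\<close> sum.lessThan_Suc_shift by simp
qed

definition hard_data :: "real \<Rightarrow> nat \<Rightarrow> nat \<Rightarrow> real" where
  "hard_data \<gamma> i j = (if j = 0 then \<gamma> else if j = 1 then (if i = 0 then \<gamma> else -1/2) else 0)"

lemma inner_hard_data:
  "inner_d 2 w (hard_data \<gamma> i) = (if i = 0 then \<gamma> * w 0 + \<gamma> * w 1 else \<gamma> * w 0 - w 1 / 2)"
  by (simp add: inner_d_2 hard_data_def mult.commute)

lemma inner_hard_data_first:
  "inner_d 2 (hard_data \<gamma> i) (hard_data \<gamma> 0) = (if i = 0 then 2 * \<gamma>\<^sup>2 else \<gamma>\<^sup>2 - \<gamma> / 2)"
  by (simp add: inner_d_2 hard_data_def power2_eq_square)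

lemma norm_hard_data_le_1:
  assumes "0 \<le> \<gamma>" "\<gamma> \<le> 1/2"
  shows "norm_d 2 (hard_data \<gamma> i) \<le> 1"
proof -
  have "\<gamma> * \<gamma> \<le> 1/2 * (1/2)" using assms by (intro mult_mono) auto
  then have "inner_d 2 (hard_data \<gamma> i) (hard_data \<gamma> i) \<le> 1"
    by (simp add: inner_d_2 hard_data_def)
  then show ?thesis by (simp add: norm_d_def)
qed

lemma lin_separable_hard_data:
  assumes "0 < \<gamma>"
  shows "lin_separable 2 n (hard_data \<gamma>)"
  unfolding lin_separable_def
  by (rule exI[of _ "\<lambda>j. if j = 0 then 1 else 0"]) (simp add: inner_hard_data assms)

lemma margin_hard_data_le:
  assumes "0 \<le> \<gamma>" "2 \<le> n" "norm_d 2 w = 1"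
  shows "Min ((\<lambda>i. inner_d 2 w (hard_data \<gamma> i)) ` {..<n}) \<le> \<gamma>"
    (is "?m \<le> _")
proof -
  have "(w 0)\<^sup>2 + (w 1)\<^sup>2 = 1"
    using assms(3) by (simp add: norm_d_def inner_d_2 power2_eq_square)
  then have "(w 0)\<^sup>2 \<le> 1" by (metis le_add_same_cancel1 zero_le_power2)
  then have w0: "w 0 \<le> 1" by (simp add: abs_square_le_1)
  have "?m \<le> inner_d 2 w (hard_data \<gamma> 0)" "?m \<le> inner_d 2 w (hard_data \<gamma> 1)"
    using assms(2) by (auto intro: Min_le)
  then have m0: "?m \<le> \<gamma> * w 0 + \<gamma> * w 1" and m1: "\<gamma> * ?m \<le> \<gamma> * (\<gamma> * w 0 - w 1 / 2)"
    using assms(1) by (auto simp: inner_hard_data intro: mult_left_mono)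
  have "(1/2 + \<gamma>) * ?m \<le> (1/2 + \<gamma>) * (\<gamma> * w 0)"
    using m0 m1 by (simp add: algebra_simps)
  also have "\<dots> \<le> (1/2 + \<gamma>) * \<gamma>"
    using w0 assms(1) by (intro mult_left_mono mult_left_le) auto
  finally show ?thesis
    using assms(1) by (simp add: mult_le_cancel_left_pos)
qed

lemma max_margin_hard_data:
  assumes "0 \<le> \<gamma>" "2 \<le> n"
  shows "max_margin 2 n (hard_data \<gamma>) = \<gamma>"
proof -
  define e0 :: "nat \<Rightarrow> real" where "e0 j = (if j = 0 then 1 else 0)" for j
  have "norm_d 2 e0 = 1" by (simp add: norm_d_def inner_d_2 e0_def)
  moreover have "(\<lambda>i. inner_d 2 e0 (hard_data \<gamma> i)) ` {..<n} = {\<gamma>}"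
    using assms(2) by (auto simp: inner_hard_data e0_def)
  ultimately have "\<gamma> \<in> (\<lambda>w. Min ((\<lambda>i. inner_d 2 w (hard_data \<gamma> i)) ` {..<n})) ` {w. norm_d 2 w = 1}"
    by (intro image_eqI[of _ _ e0]) auto
  then show ?thesis
    unfolding max_margin_def
    using margin_hard_data_le[OF assms] by (intro cSup_eq_maximum) auto
qed

lemma sum_inner_hard_data_first:
  assumes "1 \<le> n"
  shows "(\<Sum>i<n. inner_d 2 (hard_data \<gamma> i) (hard_data \<gamma> 0))
    = 2 * \<gamma>\<^sup>2 + (real n - 1) * (\<gamma>\<^sup>2 - \<gamma> / 2)"
  unfolding inner_hard_data_first using assms by (rule sum_lessThan_if_first)

lemma sum_max_inner_hard_data_first:
  assumes "1 \<le> n" "0 \<le> \<gamma>" "\<gamma> \<le> 1/2"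
  shows "(\<Sum>i<n. max 0 (inner_d 2 (hard_data \<gamma> i) (hard_data \<gamma> 0))) = 2 * \<gamma>\<^sup>2"
proof -
  have "\<gamma>\<^sup>2 - \<gamma> / 2 = \<gamma> * (\<gamma> - 1/2)" by (simp add: power2_eq_square algebra_simps)
  also have "\<dots> \<le> 0" using assms(2,3) by (simp add: mult_nonneg_nonpos)
  finally have "max 0 (inner_d 2 (hard_data \<gamma> i) (hard_data \<gamma> 0))
      = (if i = 0 then 2 * \<gamma>\<^sup>2 else 0)" for i
    by (simp add: inner_hard_data_first)
  then show ?thesis using sum_lessThan_if_first[OF assms(1)] by simp
qed

lemma first_step_outweighs_gains:
  fixes \<gamma> :: real
  assumes "0 < \<gamma>" "\<gamma> \<le> 1/6" "4 \<le> n" "16 * \<gamma> * (1 + real k) \<le> real n"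
  shows "(2 * \<gamma>\<^sup>2 + (real n - 1) * (\<gamma>\<^sup>2 - \<gamma> / 2)) / 2 + real k * (2 * \<gamma>\<^sup>2) < 0"
proof -
  from mult_left_mono[OF assms(4), of "\<gamma> / 8"] assms(1)
  have k_bound: "real k * (2 * \<gamma>\<^sup>2) \<le> \<gamma> * real n / 8 - 2 * \<gamma>\<^sup>2"
    by (simp add: power2_eq_square algebra_simps)
  have "\<gamma> * \<gamma> \<le> \<gamma> * (1/6)" using assms(1,2) by (intro mult_left_mono) auto
  then have "\<gamma>\<^sup>2 - \<gamma> / 2 \<le> - \<gamma> / 3" unfolding power2_eq_square by linarith
  then have n_bound: "(real n - 1) * (\<gamma>\<^sup>2 - \<gamma> / 2) \<le> (real n - 1) * (- \<gamma> / 3)"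
    using assms(3) by (intro mult_left_mono) auto
  have "(2 * \<gamma>\<^sup>2 + (real n - 1) * (\<gamma>\<^sup>2 - \<gamma> / 2)) / 2 + real k * (2 * \<gamma>\<^sup>2)
      \<le> (2 * \<gamma>\<^sup>2 + (real n - 1) * (- \<gamma> / 3)) / 2 + (\<gamma> * real n / 8 - 2 * \<gamma>\<^sup>2)"
    by (intro add_mono divide_right_mono add_left_mono n_bound k_bound) simp
  also have "\<dots> = - \<gamma>\<^sup>2 - \<gamma> * (real n - 4) / 24"
    by (simp add: field_simps power2_eq_square)
  also have "\<dots> < 0"
  proof -
    have "0 \<le> \<gamma> * (real n - 4)" "0 < \<gamma>\<^sup>2" using assms(1,3) by simp_all
    then show ?thesis by linarith
  qed
  finally show ?thesis .
qed

lemma inner_gd_hard_data_first_neg: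
  assumes "0 < \<gamma>" "\<gamma> \<le> 1/6" "4 \<le> n" "0 < \<eta>"
    and "1 \<le> t" "real t \<le> real n / (16 * \<gamma>)"
  shows "inner_d 2 (gd 2 n (hard_data \<gamma>) \<eta> t) (hard_data \<gamma> 0) < 0"
proof -
  obtain k where t: "t = Suc k" using assms(5) by (cases t) auto
  have "16 * \<gamma> * (1 + real k) \<le> real n"
    using assms(1,6) t by (simp add: pos_le_divide_eq mult.commute)
  with assms(1-3) have neg:
    "(2 * \<gamma>\<^sup>2 + (real n - 1) * (\<gamma>\<^sup>2 - \<gamma> / 2)) / 2 + real k * (2 * \<gamma>\<^sup>2) < 0"
    by (rule first_step_outweighs_gains)
  have "1 \<le> n" "0 \<le> \<gamma>" "\<gamma> \<le> 1/2" using assms(1-3) by auto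
  note sums = sum_inner_hard_data_first[OF this(1)] sum_max_inner_hard_data_first[OF this]
  have "inner_d 2 (gd 2 n (hard_data \<gamma>) \<eta> t) (hard_data \<gamma> 0)
      \<le> inner_d 2 (gd 2 n (hard_data \<gamma>) \<eta> 1) (hard_data \<gamma> 0)
        + real k * (\<eta> / n * (\<Sum>i<n. max 0 (inner_d 2 (hard_data \<gamma> i) (hard_data \<gamma> 0))))"
    unfolding t using assms(4) by (intro inner_gd_le_linear) simp
  also have "\<dots> = \<eta> / (2 * n) * (2 * \<gamma>\<^sup>2 + (real n - 1) * (\<gamma>\<^sup>2 - \<gamma> / 2))
      + real k * (\<eta> / n * (2 * \<gamma>\<^sup>2))"
    unfolding inner_gd_1 sums ..
  also have "\<dots> = \<eta> / n * ((2 * \<gamma>\<^sup>2 + (real n - 1) * (\<gamma>\<^sup>2 - \<gamma> / 2)) / 2 + real k * (2 * \<gamma>\<^sup>2))"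
    using assms(3) by (simp add: field_simps)
  also have "\<dots> < 0"
    using assms(3,4) neg by (intro mult_pos_neg) auto
  finally show ?thesis .
qed

theorem lemma11:
  fixes \<gamma> \<eta> :: real and n :: nat
  assumes "0 < \<gamma>" and "\<gamma> \<le> 1/6"
    and "n \<ge> 6"
    and "\<eta> \<ge> max (real n) (32 / \<gamma>^2 * ln (3 / \<gamma>))"
  shows "\<exists>(d::nat) (xs :: nat \<Rightarrow> nat \<Rightarrow> real).
           (\<forall>i<n. norm_d d (xs i) \<le> 1)
         \<and> lin_separable d n xs
         \<and> max_margin d n xs = \<gamma>
         \<and> (\<forall>t::nat. 1 \<le> t \<and> real t \<le> real n / (16 * \<gamma>) \<longrightarrow>
               (\<exists>i<n. inner_d d (gd d n xs \<eta> t) (xs i) < 0))"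
proof (rule exI[of _ 2], rule exI[of _ "hard_data \<gamma>"], intro conjI allI impI)
  fix i assume "i < n"
  show "norm_d 2 (hard_data \<gamma> i) \<le> 1"
    using assms(1,2) by (intro norm_hard_data_le_1) auto
next
  show "lin_separable 2 n (hard_data \<gamma>)"
    using assms(1) by (rule lin_separable_hard_data)
next
  show "max_margin 2 n (hard_data \<gamma>) = \<gamma>"
    using assms(1,3) by (intro max_margin_hard_data) auto
next
  fix t assume t: "1 \<le> t \<and> real t \<le> real n / (16 * \<gamma>)"
  have "real n \<le> \<eta>" using assms(4) by (rule order_trans[OF max.cobounded1])
  then have "inner_d 2 (gd 2 n (hard_data \<gamma>) \<eta> t) (hard_data \<gamma> 0) < 0"
    using assms(1-3) t by (intro inner_gd_hard_data_first_neg) auto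
  then show "\<exists>i<n. inner_d 2 (gd 2 n (hard_data \<gamma>) \<eta> t) (hard_data \<gamma> i) < 0"
    using assms(3) by (intro exI[of _ 0]) auto
qed

end
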